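(* Let $\delta_0=(\mathbf a_1,\mathbf a_2,\mathbf a_3)$ be an m-triangle of maximal area among m-triangles with the same moment of inertia, and let $\delta_1,\delta_2$ be degenerate (collinear) but nonzero m-triangles satisfying $\delta_0\times\delta_1=\delta_0\times\delta_2=0$. Then the angle $\psi$ between the lines spanned by $\delta_1$ and $\delta_2$ equals the distance between their shapes $\delta_1^\ast,\delta_2^\ast$ in the shape space $M^\ast\simeq S^2(1/2)$, namely $\psi=\frac12|\theta_2-\theta_1|$, where $\theta_i$ is the longitude of $\delta_i^\ast$ on the equator.
   Context: Masses $m_1,m_2,m_3>0$, $m_1+m_2+m_3=1$; an m-triangle is $(\mathbf a_1,\mathbf a_2,\mathbf a_3)$, $\mathbf a_i\in\mathbb R^3$, $\sum m_i\mathbf a_i=0$, with moment of inertia $I=\sum m_i|\mathbf a_i|^2$. For m-triangles $\mathbf X=(\mathbf a_i)$, $\mathbf Y=(\mathbf b_i)$, $\mathbf X\times\mathbf Y=\sum m_i\mathbf a_i\times\mathbf b_i$ (this vanishing is the zero angular momentum condition for the linear motion from $\mathbf X$ to $\mathbf Y$). The shape space $M^\ast$ consists of oriented m-triangles with $I=1$ modulo rotation; with the kinematic metric (induced from $\sum m_i|d\mathbf a_i|^2$ by zero angular momentum lifts) it is a round sphere of radius $1/2$ whose equator is the set of collinear shapes; $\theta$ is the longitude on it, and the spherical metric is $\frac14(d\varphi^2+\sin^2\varphi\,d\theta^2)$. The shape of a nonzero m-triangle is the shape of its rescaling to $I=1$. *)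

theory Defs
  imports "HOL-Analysis.Analysis" "HOL-Analysis.Cross3"
begin

type_synonym tri = "(real^3) \<times> (real^3) \<times> (real^3)"

definition is_mtri :: "real \<Rightarrow> real \<Rightarrow> real \<Rightarrow> tri \<Rightarrow> bool" where
  "is_mtri m1 m2 m3 X = (case X of (a1, a2, a3) \<Rightarrow>
      m1 *\<^sub>R a1 + m2 *\<^sub>R a2 + m3 *\<^sub>R a3 = 0)"

definition inertia :: "real \<Rightarrow> real \<Rightarrow> real \<Rightarrow> tri \<Rightarrow> real" where
  "inertia m1 m2 m3 X = (case X of (a1, a2, a3) \<Rightarrow>
      m1 * (norm a1)^2 + m2 * (norm a2)^2 + m3 * (norm a3)^2)"

definition tri_area :: "tri \<Rightarrow> real" where
  "tri_area X = (case X of (a1, a2, a3) \<Rightarrow> norm (cross3 (a2 - a1) (a3 - a1)) / 2)"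

definition mcross :: "real \<Rightarrow> real \<Rightarrow> real \<Rightarrow> tri \<Rightarrow> tri \<Rightarrow> real^3" where
  "mcross m1 m2 m3 X Y = (case X of (a1, a2, a3) \<Rightarrow> case Y of (b1, b2, b3) \<Rightarrow>
      m1 *\<^sub>R cross3 a1 b1 + m2 *\<^sub>R cross3 a2 b2 + m3 *\<^sub>R cross3 a3 b3)"

definition tri_collinear :: "tri \<Rightarrow> bool" where
  "tri_collinear X = (case X of (a1, a2, a3) \<Rightarrow> collinear {a1, a2, a3})"

definition tri_points :: "tri \<Rightarrow> (real^3) set" where
  "tri_points X = (case X of (a1, a2, a3) \<Rightarrow> {a1, a2, a3})"

definition max_area :: "real \<Rightarrow> real \<Rightarrow> real \<Rightarrow> tri \<Rightarrow> bool" where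
  "max_area m1 m2 m3 X = (is_mtri m1 m2 m3 X \<and>
      (\<forall>Y. is_mtri m1 m2 m3 Y \<and> inertia m1 m2 m3 Y = inertia m1 m2 m3 X
           \<longrightarrow> tri_area Y \<le> tri_area X))"

definition line_angle :: "tri \<Rightarrow> tri \<Rightarrow> real" where
  "line_angle X Y =
     (let u = (SOME u. u \<in> span (tri_points X) \<and> u \<noteq> 0);
          v = (SOME v. v \<in> span (tri_points Y) \<and> v \<noteq> 0)
      in arccos (\<bar>u \<bullet> v\<bar> / (norm u * norm v)))"

text \<open>Mass-weighted Jacobi vectors; then the moment of inertia equals
  |rho1|^2 + |rho2|^2 (total mass 1).\<close>
definition jac1 :: "real \<Rightarrow> real \<Rightarrow> real \<Rightarrow> tri \<Rightarrow> real^3" where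
  "jac1 m1 m2 m3 X = (case X of (a1, a2, a3) \<Rightarrow>
      sqrt (m1 * m2 / (m1 + m2)) *\<^sub>R (a2 - a1))"

definition jac2 :: "real \<Rightarrow> real \<Rightarrow> real \<Rightarrow> tri \<Rightarrow> real^3" where
  "jac2 m1 m2 m3 X = (case X of (a1, a2, a3) \<Rightarrow>
      sqrt ((m1 + m2) * m3) *\<^sub>R (a3 - (1 / (m1 + m2)) *\<^sub>R (m1 *\<^sub>R a1 + m2 *\<^sub>R a2)))"

text \<open>Equatorial part (w1, w2) of the Hopf map, as a complex number
  w1 + i w2; the shape sphere M* of radius 1/2 is the image of the normalised
  Hopf map (w1, w2, w3)/I, the equator being w3 = 0 (collinear shapes).\<close>
definition hopf_eq :: "real \<Rightarrow> real \<Rightarrow> real \<Rightarrow> tri \<Rightarrow> complex" where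
  "hopf_eq m1 m2 m3 X = Complex
      ((norm (jac1 m1 m2 m3 X))^2 - (norm (jac2 m1 m2 m3 X))^2)
      (2 * (jac1 m1 m2 m3 X \<bullet> jac2 m1 m2 m3 X))"

definition longitude :: "real \<Rightarrow> real \<Rightarrow> real \<Rightarrow> tri \<Rightarrow> real" where
  "longitude m1 m2 m3 X = Arg (hopf_eq m1 m2 m3 X)"

text \<open>Distance of two shapes on the equator of the sphere S^2(1/2):
  half the angle between the equatorial Hopf images.\<close>
definition eq_shape_dist :: "real \<Rightarrow> real \<Rightarrow> real \<Rightarrow> tri \<Rightarrow> tri \<Rightarrow> real" where
  "eq_shape_dist m1 m2 m3 X Y =
     (let z = hopf_eq m1 m2 m3 X; w = hopf_eq m1 m2 m3 Y
      in arccos ((Re z * Re w + Im z * Im w) / (cmod z * cmod w)) / 2)"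

definition circ_diff :: "real \<Rightarrow> real \<Rightarrow> real" where
  "circ_diff t1 t2 = min \<bar>t2 - t1\<bar> (2 * pi - \<bar>t2 - t1\<bar>)"

end

theory Submission
  imports Defs
begin

(* In mass-weighted Jacobi coordinates (p, q) of an m-triangle the moment of inertia is
   |p|^2 + |q|^2, the zero angular momentum pairing is p x p' + q x q', and the area is
   proportional to |p x q|. Maximal area for given inertia therefore forces p, q to be orthogonal
   of equal length, so they identify C conformally with a plane. A collinear m-triangle has parallel
   Jacobi vectors, and zero angular momentum relative to (p, q) forces them to be
   c Re z v and c Im z v, where v is the point of the plane corresponding to some z in C.
   The triangle then lies on the line R v, whose direction is arg z, while its equatorial Hopf image
   is c^2 |v|^2 z^2, whose longitude is 2 arg z. *)

section \<open>Jacobi coordinates\<close>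

text \<open>The inverse of the Jacobi transform: \<open>r1\<close> is the side \<open>a2 - a1\<close> and \<open>r2\<close> the offset of
  \<open>a3\<close> from the centre of mass of \<open>a1, a2\<close>.\<close>

definition relative_tri :: "real \<Rightarrow> real \<Rightarrow> real \<Rightarrow> real^3 \<Rightarrow> real^3 \<Rightarrow> tri" where
  "relative_tri m1 m2 m3 r1 r2 =
     (- (m3 *\<^sub>R r2) - (m2 / (m1 + m2)) *\<^sub>R r1,
      - (m3 *\<^sub>R r2) + (m1 / (m1 + m2)) *\<^sub>R r1,
      (m1 + m2) *\<^sub>R r2)"

locale three_masses =
  fixes m1 m2 m3 :: real
  assumes m1_pos: "m1 > 0" and m2_pos: "m2 > 0" and m3_pos: "m3 > 0"
    and total_mass: "m1 + m2 + m3 = 1"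
begin

text \<open>Writing \<open>m1 = u - m2\<close> with \<open>u = m1 + m2\<close> keeps \<open>field_simps\<close> from expanding powers
  of \<open>m1 + m2\<close> whose nonvanishing it cannot see.\<close>

lemma pair_mass_subst:
  obtains u where "m1 + m2 = u" "m1 = u - m2" "m3 = 1 - u" "u \<noteq> 0"
  using m1_pos m2_pos total_mass that[of "m1 + m2"] by auto

lemma is_mtri_relative_tri: "is_mtri m1 m2 m3 (relative_tri m1 m2 m3 r1 r2)"
proof -
  have "m1 * (m2 / (m1 + m2)) = m2 * (m1 / (m1 + m2))" by simp
  then show ?thesis by (simp add: is_mtri_def relative_tri_def algebra_simps)
qed

lemma relative_tri_eq:
  assumes "is_mtri m1 m2 m3 (a1, a2, a3)"
  shows "relative_tri m1 m2 m3 (a2 - a1) (a3 - (1 / (m1 + m2)) *\<^sub>R (m1 *\<^sub>R a1 + m2 *\<^sub>R a2))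
           = (a1, a2, a3)"
proof -
  obtain u where u: "m1 + m2 = u" and m: "m1 = u - m2" "m3 = 1 - u" "u \<noteq> 0"
    by (rule pair_mass_subst)
  have "(u - m2) * a1 $ i + m2 * a2 $ i + (1 - u) * a3 $ i = 0" for i
    using assms by (simp add: is_mtri_def vec_eq_iff m)
  then have "m2 * a1 $ i + u * a3 $ i = a3 $ i + (m2 * a2 $ i + u * a1 $ i)" for i
    by (simp add: algebra_simps)
  then show ?thesis
    using m(3) unfolding relative_tri_def u unfolding m(1,2)
    by (simp add: vec_eq_iff field_simps) (metis distrib_left mult.left_commute)
qed

lemma is_mtri_iff_relative_tri: "is_mtri m1 m2 m3 X \<longleftrightarrow> (\<exists>r1 r2. X = relative_tri m1 m2 m3 r1 r2)"
  using relative_tri_eq is_mtri_relative_tri by (cases X) metis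

lemma relative_tri_vectors:
  assumes "relative_tri m1 m2 m3 r1 r2 = (a1, a2, a3)"
  shows "a2 - a1 = r1" and "a3 - a1 = r2 + (m2 / (m1 + m2)) *\<^sub>R r1"
    and "a3 - (1 / (m1 + m2)) *\<^sub>R (m1 *\<^sub>R a1 + m2 *\<^sub>R a2) = r2"
proof -
  obtain u where u: "m1 + m2 = u" and m: "m1 = u - m2" "m3 = 1 - u" "u \<noteq> 0"
    by (rule pair_mass_subst)
  have a: "a1 = - (m3 *\<^sub>R r2) - (m2 / u) *\<^sub>R r1" "a2 = - (m3 *\<^sub>R r2) + ((u - m2) / u) *\<^sub>R r1"
    "a3 = u *\<^sub>R r2"
    using assms unfolding relative_tri_def u by (auto simp: m(1))
  show "a2 - a1 = r1" "a3 - a1 = r2 + (m2 / (m1 + m2)) *\<^sub>R r1"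
    "a3 - (1 / (m1 + m2)) *\<^sub>R (m1 *\<^sub>R a1 + m2 *\<^sub>R a2) = r2"
    using m(3) unfolding a u unfolding m(1,2) by (simp_all add: vec_eq_iff field_simps)
qed

lemma jac1_relative_tri:
  "jac1 m1 m2 m3 (relative_tri m1 m2 m3 r1 r2) = sqrt (m1 * m2 / (m1 + m2)) *\<^sub>R r1"
  using relative_tri_vectors(1) by (simp add: jac1_def split: prod.split)

lemma jac2_relative_tri:
  "jac2 m1 m2 m3 (relative_tri m1 m2 m3 r1 r2) = sqrt ((m1 + m2) * m3) *\<^sub>R r2"
  using relative_tri_vectors(3) by (simp add: jac2_def split: prod.split)

lemma inertia_relative_tri:
  "inertia m1 m2 m3 (relative_tri m1 m2 m3 r1 r2)
     = m1 * m2 / (m1 + m2) * (norm r1)\<^sup>2 + (m1 + m2) * m3 * (norm r2)\<^sup>2"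
proof -
  obtain u where u: "m1 + m2 = u" and m: "m1 = u - m2" "m3 = 1 - u" "u \<noteq> 0"
    by (rule pair_mass_subst)
  show ?thesis
    using m(3) unfolding inertia_def relative_tri_def power2_norm_eq_inner u unfolding m(1,2)
    by (simp add: inner_add_left inner_add_right inner_diff_left inner_diff_right inner_commute
        field_simps power2_eq_square)
qed

lemma mcross_relative_tri:
  "mcross m1 m2 m3 (relative_tri m1 m2 m3 r1 r2) (relative_tri m1 m2 m3 r1' r2')
     = (m1 * m2 / (m1 + m2)) *\<^sub>R cross3 r1 r1' + ((m1 + m2) * m3) *\<^sub>R cross3 r2 r2'"
proof -
  obtain u where u: "m1 + m2 = u" and m: "m1 = u - m2" "m3 = 1 - u" "u \<noteq> 0"
    by (rule pair_mass_subst)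
  show ?thesis
    using m(3) unfolding mcross_def relative_tri_def u unfolding m(1,2)
    by (simp add: cross_add_left cross_add_right cross_mult_left cross_mult_right
        Cross3.left_diff_distrib Cross3.right_diff_distrib vec_eq_iff field_simps)
qed

lemma tri_area_relative_tri: "tri_area (relative_tri m1 m2 m3 r1 r2) = norm (cross3 r1 r2) / 2"
  using relative_tri_vectors(1,2)
  by (simp add: tri_area_def cross_add_right cross_mult_right split: prod.split)

lemma jacobi_scales:
  "(sqrt (m1 * m2 / (m1 + m2)))\<^sup>2 = m1 * m2 / (m1 + m2)"
  "(sqrt ((m1 + m2) * m3))\<^sup>2 = (m1 + m2) * m3"
  "sqrt (m1 * m2 / (m1 + m2)) * sqrt ((m1 + m2) * m3) = sqrt (m1 * m2 * m3)"
  using m1_pos m2_pos m3_pos by (simp_all add: real_sqrt_mult[symmetric])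

lemma inertia_eq_jacobi:
  assumes "is_mtri m1 m2 m3 X"
  shows "inertia m1 m2 m3 X = (norm (jac1 m1 m2 m3 X))\<^sup>2 + (norm (jac2 m1 m2 m3 X))\<^sup>2"
proof -
  obtain r1 r2 where "X = relative_tri m1 m2 m3 r1 r2"
    using assms is_mtri_iff_relative_tri by blast
  then show ?thesis
    using jacobi_scales
    by (simp add: inertia_relative_tri jac1_relative_tri jac2_relative_tri power_mult_distrib)
qed

lemma mcross_eq_jacobi:
  assumes "is_mtri m1 m2 m3 X" "is_mtri m1 m2 m3 Y"
  shows "mcross m1 m2 m3 X Y = cross3 (jac1 m1 m2 m3 X) (jac1 m1 m2 m3 Y)
                              + cross3 (jac2 m1 m2 m3 X) (jac2 m1 m2 m3 Y)"
proof -
  obtain r1 r2 r1' r2' where "X = relative_tri m1 m2 m3 r1 r2" "Y = relative_tri m1 m2 m3 r1' r2'"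
    using assms is_mtri_iff_relative_tri by meson
  then show ?thesis
    using jacobi_scales
    by (simp add: mcross_relative_tri jac1_relative_tri jac2_relative_tri
        cross_mult_left cross_mult_right power2_eq_square)
qed

lemma tri_area_eq_jacobi:
  assumes "is_mtri m1 m2 m3 X"
  shows "tri_area X = norm (cross3 (jac1 m1 m2 m3 X) (jac2 m1 m2 m3 X)) / (2 * sqrt (m1 * m2 * m3))"
proof -
  obtain r1 r2 where "X = relative_tri m1 m2 m3 r1 r2"
    using assms is_mtri_iff_relative_tri by blast
  then show ?thesis
    using jacobi_scales m1_pos m2_pos m3_pos
    by (simp add: tri_area_relative_tri jac1_relative_tri jac2_relative_tri
        cross_mult_left cross_mult_right mult.commute[of "sqrt ((m1 + m2) * m3)"])
qed

lemma exists_mtri_jacobi: "\<exists>X. is_mtri m1 m2 m3 X \<and> jac1 m1 m2 m3 X = p \<and> jac2 m1 m2 m3 X = q"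
proof -
  define X where "X = relative_tri m1 m2 m3 (p /\<^sub>R sqrt (m1 * m2 / (m1 + m2)))
                                         (q /\<^sub>R sqrt ((m1 + m2) * m3))"
  then have "is_mtri m1 m2 m3 X \<and> jac1 m1 m2 m3 X = p \<and> jac2 m1 m2 m3 X = q"
    using m1_pos m2_pos m3_pos
    by (simp add: is_mtri_relative_tri jac1_relative_tri jac2_relative_tri)
  then show ?thesis by blast
qed

lemma mtri_eq_0_if_jacobi_eq_0:
  assumes "is_mtri m1 m2 m3 X" "jac1 m1 m2 m3 X = 0" "jac2 m1 m2 m3 X = 0"
  shows "X = (0, 0, 0)"
proof -
  obtain r1 r2 where X: "X = relative_tri m1 m2 m3 r1 r2"
    using assms(1) is_mtri_iff_relative_tri by blast
  then have "r1 = 0" "r2 = 0"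
    using assms(2,3) m1_pos m2_pos m3_pos by (simp_all add: jac1_relative_tri jac2_relative_tri)
  then show ?thesis by (simp add: X relative_tri_def)
qed

lemma tri_points_subset_span_jacobi:
  assumes "is_mtri m1 m2 m3 X"
  shows "tri_points X \<subseteq> span {jac1 m1 m2 m3 X, jac2 m1 m2 m3 X}"
proof -
  obtain r1 r2 where X: "X = relative_tri m1 m2 m3 r1 r2"
    using assms is_mtri_iff_relative_tri by blast
  have "r1 = inverse (sqrt (m1 * m2 / (m1 + m2))) *\<^sub>R jac1 m1 m2 m3 X"
       "r2 = inverse (sqrt ((m1 + m2) * m3)) *\<^sub>R jac2 m1 m2 m3 X"
    using m1_pos m2_pos m3_pos by (simp_all add: X jac1_relative_tri jac2_relative_tri)
  then have "r1 \<in> span {jac1 m1 m2 m3 X, jac2 m1 m2 m3 X}" "r2 \<in> span {jac1 m1 m2 m3 X, jac2 m1 m2 m3 X}"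
    by (metis insert_iff span_base span_mul)+
  then show ?thesis
    by (simp add: X tri_points_def relative_tri_def span_add span_diff span_mul span_neg)
qed

end

section \<open>Conformal frames and zero angular momentum\<close>

lemma tri_area_eq_0_if_collinear:
  assumes "tri_collinear X"
  shows "tri_area X = 0"
proof (cases X)
  case (fields a1 a2 a3)
  then have "collinear {a2, a1, a3}" using assms by (simp add: tri_collinear_def insert_commute)
  then have "collinear {0, a2 - a1, a3 - a1}" by (simp add: collinear_3)
  then show ?thesis by (simp add: fields tri_area_def flip: cross_eq_0)
qed

lemma conformal_if_half_sum_sq_le_norm_cross:
  fixes p q :: "real^3"
  assumes "((norm p)\<^sup>2 + (norm q)\<^sup>2) / 2 \<le> norm (cross3 p q)"
  shows "p \<bullet> q = 0" and "norm p = norm q"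
proof -
  have "(((norm p)\<^sup>2 + (norm q)\<^sup>2) / 2)\<^sup>2 \<le> (norm (cross3 p q))\<^sup>2"
    using assms by (intro power_mono) auto
  then have "((norm p)\<^sup>2 - (norm q)\<^sup>2)\<^sup>2 + 4 * (p \<bullet> q)\<^sup>2 \<le> 0"
    unfolding norm_cross by (simp add: power2_eq_square field_simps)
  moreover have "0 \<le> ((norm p)\<^sup>2 - (norm q)\<^sup>2)\<^sup>2" "0 \<le> (p \<bullet> q)\<^sup>2" by simp_all
  ultimately have "((norm p)\<^sup>2 - (norm q)\<^sup>2)\<^sup>2 = 0" "(p \<bullet> q)\<^sup>2 = 0" by linarith+
  then show "p \<bullet> q = 0" "norm p = norm q" by simp_all
qed

text \<open>For orthogonal \<open>p, q\<close> of equal length this is a conformal identification of \<open>\<complex>\<close> with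
  the plane they span.\<close>

definition frame_vec :: "real^3 \<Rightarrow> real^3 \<Rightarrow> complex \<Rightarrow> real^3" where
  "frame_vec p q \<zeta> = Re \<zeta> *\<^sub>R p + Im \<zeta> *\<^sub>R q"

lemma inner_frame_vec:
  assumes "p \<bullet> q = 0" "norm p = norm q"
  shows "frame_vec p q \<zeta> \<bullet> frame_vec p q \<eta> = (norm p)\<^sup>2 * Re (\<zeta> * cnj \<eta>)"
proof -
  have "q \<bullet> q = p \<bullet> p" using assms(2) by (simp flip: power2_norm_eq_inner)
  then show ?thesis
    using assms(1) unfolding frame_vec_def power2_norm_eq_inner
    by (simp add: inner_add_left inner_add_right inner_commute algebra_simps)
qed

lemma norm_frame_vec:
  assumes "p \<bullet> q = 0" "norm p = norm q"
  shows "norm (frame_vec p q \<zeta>) = norm p * cmod \<zeta>"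
proof -
  have "Re (\<zeta> * cnj \<zeta>) = (cmod \<zeta>)\<^sup>2" by (simp only: complex_mult_cnj cmod_power2 Re_complex_of_real)
  then have "(norm (frame_vec p q \<zeta>))\<^sup>2 = (norm p * cmod \<zeta>)\<^sup>2"
    using inner_frame_vec[OF assms, of \<zeta> \<zeta>] by (simp add: power2_norm_eq_inner power_mult_distrib)
  then show ?thesis by (simp add: power2_eq_iff_nonneg)
qed

lemma frame_vec_nonzero:
  assumes "p \<bullet> q = 0" "p \<noteq> 0" "q \<noteq> 0" "\<zeta> \<noteq> 0"
  shows "frame_vec p q \<zeta> \<noteq> 0"
proof -
  have "frame_vec p q \<zeta> \<bullet> frame_vec p q \<zeta> = (Re \<zeta>)\<^sup>2 * (p \<bullet> p) + (Im \<zeta>)\<^sup>2 * (q \<bullet> q)"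
    using assms(1) unfolding frame_vec_def
    by (simp add: inner_add_left inner_add_right inner_commute power2_eq_square)
  moreover have "(Re \<zeta>)\<^sup>2 * (p \<bullet> p) + (Im \<zeta>)\<^sup>2 * (q \<bullet> q) > 0"
    using assms(2-4) complex_eq_iff[of \<zeta> 0]
    by (auto intro: add_pos_nonneg add_nonneg_pos)
  ultimately show ?thesis by auto
qed

text \<open>Writing the parallel pair as \<open>p1 = x1 w, q1 = x2 w\<close>, the momentum condition becomes
  \<open>(x1 p + x2 q) \<times> w = 0\<close>, so \<open>w\<close> is a multiple of the frame vector of \<open>x1 + i x2\<close>.\<close>

lemma zero_momentum_parallel_pair:
  fixes p q p1 q1 :: "real^3"
  assumes pq: "p \<bullet> q = 0" "p \<noteq> 0" "q \<noteq> 0"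
    and momentum: "cross3 p p1 + cross3 q q1 = 0" and parallel: "cross3 p1 q1 = 0"
    and nonzero: "p1 \<noteq> 0 \<or> q1 \<noteq> 0"
  obtains \<zeta> c where "\<zeta> \<noteq> 0" "c \<noteq> 0"
    "p1 = (c * Re \<zeta>) *\<^sub>R frame_vec p q \<zeta>" "q1 = (c * Im \<zeta>) *\<^sub>R frame_vec p q \<zeta>"
proof -
  obtain \<zeta> w where w: "w \<noteq> 0" "\<zeta> \<noteq> 0" "p1 = Re \<zeta> *\<^sub>R w" "q1 = Im \<zeta> *\<^sub>R w"
  proof -
    have "p1 = 0 \<or> q1 = 0 \<or> (\<exists>c. q1 = c *\<^sub>R p1)"
      using parallel by (simp add: cross_eq_0 collinear_lemma)
    then show ?thesis
    proof (elim disjE exE)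
      assume "p1 = 0"
      then show ?thesis using nonzero that[of q1 \<i>] by simp
    next
      assume "q1 = 0"
      then show ?thesis using nonzero that[of p1 1] by simp
    next
      fix c assume "q1 = c *\<^sub>R p1"
      then show ?thesis using nonzero that[of p1 "Complex 1 c"] by (simp add: complex_eq_iff)
    qed
  qed
  define v where "v = frame_vec p q \<zeta>"
  have "cross3 v w = cross3 p p1 + cross3 q q1"
    by (simp add: v_def frame_vec_def w(3,4) cross_add_left cross_mult_left cross_mult_right)
  then have "collinear {0, v, w}" using momentum by (simp add: cross_eq_0)
  moreover have "v \<noteq> 0" using frame_vec_nonzero[OF pq w(2)] by (simp add: v_def)
  ultimately obtain c where "w = c *\<^sub>R v" using w(1) by (auto simp: collinear_lemma)
  then show ?thesis
    using that[of \<zeta> c] w by (simp add: v_def)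
qed

lemma hopf_eq_parallel:
  assumes "jac1 m1 m2 m3 X = (c * Re \<zeta>) *\<^sub>R v" "jac2 m1 m2 m3 X = (c * Im \<zeta>) *\<^sub>R v"
  shows "hopf_eq m1 m2 m3 X = complex_of_real (c\<^sup>2 * (norm v)\<^sup>2) * \<zeta>\<^sup>2"
  unfolding hopf_eq_def assms power2_norm_eq_inner
  by (simp add: complex_eq_iff power2_eq_square algebra_simps)

lemma span_eq_span_singletonI:
  fixes v :: "'a::real_vector"
  assumes "S \<subseteq> span {v}" "a \<in> S" "a \<noteq> 0"
  shows "span S = span {v}"
proof -
  obtain k where "a = k *\<^sub>R v" using assms(1,2) by (auto simp: span_singleton)
  then have "v = inverse k *\<^sub>R a" using assms(3) by auto
  then have "v \<in> span S" using assms(2) by (simp add: span_base span_mul)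
  then show ?thesis using assms(1) by (simp add: span_eq)
qed

lemma line_angle_eq:
  assumes "span (tri_points X) = span {v}" "span (tri_points Y) = span {w}" "v \<noteq> 0" "w \<noteq> 0"
  shows "line_angle X Y = arccos (\<bar>v \<bullet> w\<bar> / (norm v * norm w))"
proof -
  have "\<exists>u. u \<in> span (tri_points X) \<and> u \<noteq> 0" "\<exists>u. u \<in> span (tri_points Y) \<and> u \<noteq> 0"
    using assms by (auto intro: span_base)
  then obtain k l where "k \<noteq> 0" "l \<noteq> 0"
    "(SOME u. u \<in> span (tri_points X) \<and> u \<noteq> 0) = k *\<^sub>R v"
    "(SOME u. u \<in> span (tri_points Y) \<and> u \<noteq> 0) = l *\<^sub>R w"
    using someI_ex[of "\<lambda>u. u \<in> span (tri_points X) \<and> u \<noteq> 0"]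
      someI_ex[of "\<lambda>u. u \<in> span (tri_points Y) \<and> u \<noteq> 0"]
    unfolding assms(1,2) span_singleton by fastforce
  then show ?thesis
    by (simp add: line_angle_def abs_mult)
qed

lemma line_angle_frame_vec:
  assumes pq: "p \<bullet> q = 0" "norm p = norm q" "p \<noteq> 0" and "\<zeta> \<noteq> 0" "\<eta> \<noteq> 0"
    and "span (tri_points X) = span {frame_vec p q \<zeta>}" "span (tri_points Y) = span {frame_vec p q \<eta>}"
  shows "line_angle X Y = arccos (\<bar>Re (\<zeta> * cnj \<eta>)\<bar> / (cmod \<zeta> * cmod \<eta>))"
proof -
  have "q \<noteq> 0" using pq(2,3) by auto
  have "(norm p)\<^sup>2 * \<bar>Re (\<zeta> * cnj \<eta>)\<bar> / (norm p * cmod \<zeta> * (norm p * cmod \<eta>))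
      = \<bar>Re (\<zeta> * cnj \<eta>)\<bar> / (cmod \<zeta> * cmod \<eta>)"
    using pq(3) by (simp add: power2_eq_square)
  then show ?thesis
    using line_angle_eq[OF assms(6,7)] frame_vec_nonzero[OF pq(1,3) \<open>q \<noteq> 0\<close>] assms(4,5)
    by (simp add: inner_frame_vec[OF pq(1,2)] norm_frame_vec[OF pq(1,2)] abs_mult)
qed

context three_masses
begin

text \<open>The competitor \<open>Y\<close> has orthogonal Jacobi vectors of equal length and the same inertia \<open>I\<close>,
  so \<open>|p \<times> q| \<le> |p| |q| \<le> I / 2 = |jac1 Y \<times> jac2 Y|\<close>; maximality forces equality.\<close>

lemma max_area_jacobi_conformal:
  assumes "max_area m1 m2 m3 d0"
  shows "jac1 m1 m2 m3 d0 \<bullet> jac2 m1 m2 m3 d0 = 0"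
    and "norm (jac1 m1 m2 m3 d0) = norm (jac2 m1 m2 m3 d0)"
proof -
  define p q where "p = jac1 m1 m2 m3 d0" and "q = jac2 m1 m2 m3 d0"
  define r where "r = sqrt (((norm p)\<^sup>2 + (norm q)\<^sup>2) / 2)"
  have r2: "r\<^sup>2 = ((norm p)\<^sup>2 + (norm q)\<^sup>2) / 2" by (simp add: r_def)
  have d0: "is_mtri m1 m2 m3 d0" using assms by (simp add: max_area_def)
  obtain Y where Y: "is_mtri m1 m2 m3 Y" "jac1 m1 m2 m3 Y = r *\<^sub>R axis 1 1"
    "jac2 m1 m2 m3 Y = r *\<^sub>R axis 2 1"
    using exists_mtri_jacobi by blast
  have "inertia m1 m2 m3 Y = inertia m1 m2 m3 d0"
    using Y d0 r2 by (simp add: inertia_eq_jacobi p_def q_def power_mult_distrib)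
  then have "tri_area Y \<le> tri_area d0" using assms Y(1) unfolding max_area_def by blast
  moreover have "tri_area Y = r\<^sup>2 / (2 * sqrt (m1 * m2 * m3))"
    using Y by (simp add: tri_area_eq_jacobi cross_mult_left cross_mult_right cross_basis
        power2_eq_square)
  moreover have "tri_area d0 = norm (cross3 p q) / (2 * sqrt (m1 * m2 * m3))"
    using d0 by (simp add: tri_area_eq_jacobi p_def q_def)
  moreover have "sqrt (m1 * m2 * m3) > 0" using m1_pos m2_pos m3_pos by simp
  ultimately have "r\<^sup>2 \<le> norm (cross3 p q)"
    by (simp add: divide_le_cancel)
  then have "((norm p)\<^sup>2 + (norm q)\<^sup>2) / 2 \<le> norm (cross3 p q)" by (simp only: r2)
  then show "p \<bullet> q = 0" "norm p = norm q"
    by (rule conformal_if_half_sum_sq_le_norm_cross)+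
qed

lemma collinear_zero_momentum_shape:
  assumes d0: "is_mtri m1 m2 m3 d0" "jac1 m1 m2 m3 d0 \<bullet> jac2 m1 m2 m3 d0 = 0"
      "jac1 m1 m2 m3 d0 \<noteq> 0" "jac2 m1 m2 m3 d0 \<noteq> 0"
    and d: "is_mtri m1 m2 m3 d" "tri_collinear d" "d \<noteq> (0, 0, 0)"
    and momentum: "mcross m1 m2 m3 d0 d = 0"
  obtains \<zeta> K where "\<zeta> \<noteq> 0" "K > 0"
    "span (tri_points d) = span {frame_vec (jac1 m1 m2 m3 d0) (jac2 m1 m2 m3 d0) \<zeta>}"
    "hopf_eq m1 m2 m3 d = of_real K * \<zeta>\<^sup>2"
proof -
  define p q p1 q1 where "p = jac1 m1 m2 m3 d0" and "q = jac2 m1 m2 m3 d0"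
    and "p1 = jac1 m1 m2 m3 d" and "q1 = jac2 m1 m2 m3 d"
  have "cross3 p p1 + cross3 q q1 = 0"
    using momentum d0(1) d(1) by (simp add: mcross_eq_jacobi p_def q_def p1_def q1_def)
  moreover have "cross3 p1 q1 = 0"
    using tri_area_eq_0_if_collinear[OF d(2)] tri_area_eq_jacobi[OF d(1)] m1_pos m2_pos m3_pos
    by (simp add: p1_def q1_def)
  moreover have "p1 \<noteq> 0 \<or> q1 \<noteq> 0"
    using mtri_eq_0_if_jacobi_eq_0[OF d(1)] d(3) by (auto simp: p1_def q1_def)
  ultimately obtain \<zeta> c where \<zeta>: "\<zeta> \<noteq> 0" "c \<noteq> 0"
    "p1 = (c * Re \<zeta>) *\<^sub>R frame_vec p q \<zeta>" "q1 = (c * Im \<zeta>) *\<^sub>R frame_vec p q \<zeta>"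
    using zero_momentum_parallel_pair d0(2-4) unfolding p_def q_def by metis
  define v where "v = frame_vec p q \<zeta>"
  have "v \<noteq> 0" using frame_vec_nonzero d0(2-4) \<zeta>(1) by (simp add: v_def p_def q_def)
  have "tri_points d \<subseteq> span {v}"
  proof -
    have "{p1, q1} \<subseteq> span {v}" using \<zeta>(3,4) by (simp add: v_def span_base span_mul)
    then show ?thesis
      using tri_points_subset_span_jacobi[OF d(1)] span_minimal[OF _ subspace_span]
      unfolding p1_def q1_def by blast
  qed
  moreover obtain a where "a \<in> tri_points d" "a \<noteq> 0"
    using d(3) by (cases d) (auto simp: tri_points_def)
  ultimately have "span (tri_points d) = span {v}" by (rule span_eq_span_singletonI)
  moreover have "hopf_eq m1 m2 m3 d = of_real (c\<^sup>2 * (norm v)\<^sup>2) * \<zeta>\<^sup>2"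
    using \<zeta>(3,4) by (intro hopf_eq_parallel) (simp_all add: v_def p1_def q1_def)
  moreover have "c\<^sup>2 * (norm v)\<^sup>2 > 0" using \<zeta>(2) \<open>v \<noteq> 0\<close> by simp
  ultimately show ?thesis using that \<zeta>(1) unfolding v_def p_def q_def by blast
qed

end

section \<open>Doubling of angles\<close>

lemma arccos_abs_eq_half_arccos:
  fixes c :: real
  assumes "\<bar>c\<bar> \<le> 1"
  shows "arccos \<bar>c\<bar> = arccos (2 * c\<^sup>2 - 1) / 2"
proof -
  define \<alpha> where "\<alpha> = arccos \<bar>c\<bar>"
  have "0 \<le> \<alpha>" "\<alpha> \<le> pi / 2"
    using assms arccos_le_pi2[of "\<bar>c\<bar>"] arccos_lbound[of "\<bar>c\<bar>"] by (auto simp: \<alpha>_def)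
  moreover have "cos (2 * \<alpha>) = 2 * c\<^sup>2 - 1"
    using assms by (simp add: \<alpha>_def cos_double_cos cos_arccos)
  ultimately have "arccos (2 * c\<^sup>2 - 1) = 2 * \<alpha>"
    using arccos_cos[of "2 * \<alpha>"] by simp
  then show ?thesis by (simp add: \<alpha>_def)
qed

lemma arccos_cos_eq_circ_diff:
  assumes "- pi < a" "a \<le> pi" "- pi < b" "b \<le> pi"
  shows "arccos (cos (a - b)) = circ_diff a b"
proof -
  define d where "d = \<bar>b - a\<bar>"
  have cos_d: "cos (a - b) = cos d"
    unfolding d_def by (metis abs_minus_commute cos_abs_real)
  have "0 \<le> d" "d < 2 * pi" using assms by (auto simp: d_def)
  show ?thesis
  proof (cases "d \<le> pi")
    case True
    then show ?thesis using \<open>0 \<le> d\<close> by (simp add: cos_d circ_diff_def arccos_cos flip: d_def)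
  next
    case False
    have "cos d = cos (2 * pi - d)" by (simp add: cos_diff)
    moreover have "arccos (cos (2 * pi - d)) = 2 * pi - d"
      using \<open>d < 2 * pi\<close> False by (intro arccos_cos) auto
    ultimately show ?thesis using False by (simp add: cos_d circ_diff_def flip: d_def)
  qed
qed

lemma arccos_cos_Arg_diff:
  assumes "z \<noteq> 0" "w \<noteq> 0"
  shows "arccos ((Re z * Re w + Im z * Im w) / (cmod z * cmod w)) = circ_diff (Arg z) (Arg w)"
proof -
  have "Re z * Re w + Im z * Im w = cmod z * cmod w * cos (Arg z - Arg w)"
    by (subst (1 2) rcis_cmod_Arg[symmetric], subst (1 2) rcis_cmod_Arg[symmetric])
      (simp add: cos_diff algebra_simps)
  then show ?thesis
    using assms Arg_bounded[of z] Arg_bounded[of w] by (simp add: arccos_cos_eq_circ_diff)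
qed

lemma half_angle_of_squares:
  fixes \<zeta> \<eta> :: complex and K L :: real
  assumes "\<zeta> \<noteq> 0" "\<eta> \<noteq> 0" "K > 0" "L > 0"
    and z: "z = of_real K * \<zeta>\<^sup>2" and w: "w = of_real L * \<eta>\<^sup>2"
  shows "arccos (\<bar>Re (\<zeta> * cnj \<eta>)\<bar> / (cmod \<zeta> * cmod \<eta>))
           = arccos ((Re z * Re w + Im z * Im w) / (cmod z * cmod w)) / 2"
proof -
  define u where "u = \<zeta> * cnj \<eta>"
  have "cmod u \<noteq> 0" using assms(1,2) by (simp add: u_def)
  have "Re z * Re w + Im z * Im w = K * L * Re (u\<^sup>2)"
    by (simp add: z w u_def power2_eq_square algebra_simps)
  also have "Re (u\<^sup>2) = 2 * (Re u)\<^sup>2 - (cmod u)\<^sup>2"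
    using cmod_power2[of u] by (simp add: power2_eq_square)
  finally have "(Re z * Re w + Im z * Im w) / (cmod z * cmod w)
      = K * L * (2 * (Re u)\<^sup>2 - (cmod u)\<^sup>2) / (K * L * (cmod u)\<^sup>2)"
    using assms(3,4) by (simp add: z w u_def norm_mult norm_power power2_eq_square abs_of_pos)
  also have "\<dots> = 2 * (Re u / cmod u)\<^sup>2 - 1"
    using assms(3,4) \<open>cmod u \<noteq> 0\<close> by (simp add: field_simps power2_eq_square)
  finally have "(Re z * Re w + Im z * Im w) / (cmod z * cmod w) = 2 * (Re u / cmod u)\<^sup>2 - 1" .
  moreover have "\<bar>Re u / cmod u\<bar> \<le> 1"
    using abs_Re_le_cmod[of u] \<open>cmod u \<noteq> 0\<close> by (simp add: divide_le_eq_1)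
  moreover have "cmod \<zeta> * cmod \<eta> = cmod u" by (simp add: u_def norm_mult)
  ultimately show ?thesis
    using arccos_abs_eq_half_arccos[of "Re u / cmod u"] by (simp add: abs_divide flip: u_def)
qed

theorem mainTheorem8:
  fixes m1 m2 m3 :: real and d0 d1 d2 :: tri
  assumes "m1 > 0" "m2 > 0" "m3 > 0" "m1 + m2 + m3 = 1"
    and "max_area m1 m2 m3 d0" "d0 \<noteq> (0, 0, 0)"
    and "is_mtri m1 m2 m3 d1" "tri_collinear d1" "d1 \<noteq> (0, 0, 0)"
    and "is_mtri m1 m2 m3 d2" "tri_collinear d2" "d2 \<noteq> (0, 0, 0)"
    and "mcross m1 m2 m3 d0 d1 = 0" "mcross m1 m2 m3 d0 d2 = 0"
  shows "line_angle d1 d2 = eq_shape_dist m1 m2 m3 d1 d2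
       \<and> line_angle d1 d2 = circ_diff (longitude m1 m2 m3 d1) (longitude m1 m2 m3 d2) / 2"
proof -
  interpret three_masses m1 m2 m3 using assms(1-4) by unfold_locales
  define p q where "p = jac1 m1 m2 m3 d0" and "q = jac2 m1 m2 m3 d0"
  have d0: "is_mtri m1 m2 m3 d0" using assms(5) by (simp add: max_area_def)
  have pq: "p \<bullet> q = 0" "norm p = norm q"
    using max_area_jacobi_conformal[OF assms(5)] by (simp_all add: p_def q_def)
  have nonzero: "p \<noteq> 0" "q \<noteq> 0"
    using mtri_eq_0_if_jacobi_eq_0[OF d0] assms(6) pq(2) by (auto simp: p_def q_def)
  obtain \<zeta> K where \<zeta>: "\<zeta> \<noteq> 0" "K > 0" "span (tri_points d1) = span {frame_vec p q \<zeta>}"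
      "hopf_eq m1 m2 m3 d1 = of_real K * \<zeta>\<^sup>2"
    using collinear_zero_momentum_shape[OF d0 _ _ _ assms(7-9,13)] pq(1) nonzero
    unfolding p_def q_def by metis
  obtain \<eta> L where \<eta>: "\<eta> \<noteq> 0" "L > 0" "span (tri_points d2) = span {frame_vec p q \<eta>}"
      "hopf_eq m1 m2 m3 d2 = of_real L * \<eta>\<^sup>2"
    using collinear_zero_momentum_shape[OF d0 _ _ _ assms(10-12,14)] pq(1) nonzero
    unfolding p_def q_def by metis
  have "line_angle d1 d2 = arccos (\<bar>Re (\<zeta> * cnj \<eta>)\<bar> / (cmod \<zeta> * cmod \<eta>))"
    using line_angle_frame_vec[OF pq nonzero(1) \<zeta>(1) \<eta>(1) \<zeta>(3) \<eta>(3)] .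
  also have "\<dots> = eq_shape_dist m1 m2 m3 d1 d2"
    using half_angle_of_squares[OF \<zeta>(1) \<eta>(1) \<zeta>(2) \<eta>(2) \<zeta>(4) \<eta>(4)]
    by (simp add: eq_shape_dist_def Let_def)
  finally show ?thesis
    using arccos_cos_Arg_diff[of "hopf_eq m1 m2 m3 d1" "hopf_eq m1 m2 m3 d2"] \<zeta> \<eta>
    by (simp add: eq_shape_dist_def longitude_def Let_def)
qed

end
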